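(* Let $w$ be a weak convergence for a metric space $(X,d)$. If $\{x_n\}_{n\in\mathbb{N}}$ and $x$ in $X$ satisfy $x_n\to x$ in $d$, then every subsequence of $\{x_n\}_{n\in\mathbb{N}}$ admits a further subsequence converging in $w$ to $x$.
   Context: A convergence $c$ on a set $X$ is a rule assigning at most one point of $X$ as the "limit" of each sequence in $X$, such that whenever a sequence has limit $x$, every subsequence also has limit $x$; we write $x_n\to x$ in $c$. A convergence $w$ on $X$ is a weak convergence for $(X,d)$ if: (W1) whenever $\{x_n\}$ and $y$ in $X$ satisfy $\sup_n d(x_n,y)<\infty$, there are a subsequence $\{n_k\}$ and $x\in X$ with $x_{n_k}\to x$ in $w$; (W2) whenever $x_n\to x$ in $w$, $d(x,y)\le\liminf_n d(x_n,y)$ for all $y\in X$; (W3) whenever $x_n\to x$ in $w$ and $d(x_n,y)\to d(x,y)$ for some $y\in X$, then $d(x_n,x)\to0$. *)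

theory Defs
  imports "HOL-Analysis.Analysis"
begin

definition is_convergence :: "'a set \<Rightarrow> ((nat \<Rightarrow> 'a) \<Rightarrow> 'a \<Rightarrow> bool) \<Rightarrow> bool" where
  "is_convergence M c \<longleftrightarrow>
     (\<forall>xs x. c xs x \<longrightarrow> range xs \<subseteq> M \<and> x \<in> M) \<and>
     (\<forall>xs x y. c xs x \<and> c xs y \<longrightarrow> x = y) \<and>
     (\<forall>xs x r. c xs x \<and> strict_mono (r::nat\<Rightarrow>nat) \<longrightarrow> c (xs \<circ> r) x)"

definition weak_conv_for ::
  "'a set \<Rightarrow> ('a \<Rightarrow> 'a \<Rightarrow> real) \<Rightarrow> ((nat \<Rightarrow> 'a) \<Rightarrow> 'a \<Rightarrow> bool) \<Rightarrow> bool" where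
  "weak_conv_for M d w \<longleftrightarrow>
     is_convergence M w \<and>
     (\<forall>xs y. range xs \<subseteq> M \<and> y \<in> M \<and> bdd_above (range (\<lambda>n. d (xs n) y)) \<longrightarrow>
        (\<exists>r x. strict_mono (r::nat\<Rightarrow>nat) \<and> x \<in> M \<and> w (xs \<circ> r) x)) \<and>
     (\<forall>xs x y. w xs x \<and> y \<in> M \<longrightarrow>
        ereal (d x y) \<le> liminf (\<lambda>n. ereal (d (xs n) y))) \<and>
     (\<forall>xs x y. w xs x \<and> y \<in> M \<and> (\<lambda>n. d (xs n) y) \<longlonglongrightarrow> d x y \<longrightarrow>
        (\<lambda>n. d (xs n) x) \<longlonglongrightarrow> 0)"

end

theory Submission
  imports Defs
begin

(* A sequence converging in d has bounded distances to its limit x, so by (W1) every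
   subsequence has a further subsequence with some weak limit z; by (W2),
   d(z, x) <= liminf d(x_n, x) = 0, hence z = x. *)

lemma convergence_limit_in_carrier:
  "is_convergence M c \<Longrightarrow> c xs x \<Longrightarrow> x \<in> M"
  unfolding is_convergence_def by blast

lemma weak_conv_for_imp_convergence:
  "weak_conv_for M d w \<Longrightarrow> is_convergence M w"
  unfolding weak_conv_for_def by (rule conjunct1)

lemma weak_conv_for_bounded_imp_subseq:
  fixes xs :: "nat \<Rightarrow> 'a"
  shows "weak_conv_for M d w \<Longrightarrow> range xs \<subseteq> M \<Longrightarrow> y \<in> M \<Longrightarrow>
    bdd_above (range (\<lambda>n. d (xs n) y)) \<Longrightarrow> \<exists>r x. strict_mono r \<and> x \<in> M \<and> w (xs \<circ> r) x"
  unfolding weak_conv_for_def by blast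

lemma weak_conv_for_dist_le_liminf:
  "weak_conv_for M d w \<Longrightarrow> w xs x \<Longrightarrow> y \<in> M \<Longrightarrow>
    ereal (d x y) \<le> liminf (\<lambda>n. ereal (d (xs n) y))"
  unfolding weak_conv_for_def by blast

lemma weak_limit_eq_if_dist_tendsto_zero:
  assumes "Metric_space M d" and "weak_conv_for M d w"
    and "w xs z" and "y \<in> M" and "(\<lambda>n. d (xs n) y) \<longlonglongrightarrow> 0"
  shows "z = y"
proof -
  interpret Metric_space M d by fact
  have "z \<in> M"
    using assms(2,3) by (blast intro: convergence_limit_in_carrier weak_conv_for_imp_convergence)
  have "liminf (\<lambda>n. ereal (d (xs n) y)) = ereal 0"
    using assms(5) by (intro lim_imp_Liminf) auto
  with weak_conv_for_dist_le_liminf[OF assms(2-4)] have "d z y \<le> 0"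
    by simp
  then show "z = y"
    using \<open>z \<in> M\<close> \<open>y \<in> M\<close> nonneg zero by (meson order_antisym)
qed

lemma weak_conv_subseq_if_dist_tendsto_zero:
  assumes "Metric_space M d" and "weak_conv_for M d w"
    and "range xs \<subseteq> M" and "x \<in> M" and "(\<lambda>n. d (xs n) x) \<longlonglongrightarrow> 0"
  shows "\<exists>s. strict_mono s \<and> w (xs \<circ> s) x"
proof -
  have "bdd_above (range (\<lambda>n. d (xs n) x))"
    using assms(5) by (intro Bseq_bdd_above convergent_imp_Bseq convergentI)
  then obtain s z where s: "strict_mono s" and wz: "w (xs \<circ> s) z"
    using weak_conv_for_bounded_imp_subseq[OF assms(2-4)] by blast
  have "(\<lambda>n. d ((xs \<circ> s) n) x) \<longlonglongrightarrow> 0"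
    using LIMSEQ_subseq_LIMSEQ[OF assms(5) s] by (simp add: o_def)
  with weak_limit_eq_if_dist_tendsto_zero[OF assms(1,2) wz assms(4)] have "z = x" .
  with s wz show ?thesis
    by blast
qed

theorem lemma2p2:
  fixes M :: "'a set" and d :: "'a \<Rightarrow> 'a \<Rightarrow> real"
    and w :: "(nat \<Rightarrow> 'a) \<Rightarrow> 'a \<Rightarrow> bool" and xs :: "nat \<Rightarrow> 'a" and x :: 'a
  assumes "Metric_space M d"
    and "weak_conv_for M d w"
    and "range xs \<subseteq> M" and "x \<in> M"
    and "limitin (Metric_space.mtopology M d) xs x sequentially"
  shows "\<forall>r::nat\<Rightarrow>nat. strict_mono r \<longrightarrow> (\<exists>s::nat\<Rightarrow>nat. strict_mono s \<and> w (xs \<circ> r \<circ> s) x)"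
proof (intro allI impI)
  fix r :: "nat \<Rightarrow> nat"
  assume r: "strict_mono r"
  have "(\<lambda>n. d (xs n) x) \<longlonglongrightarrow> 0"
    using assms(5) Metric_space.limitin_metric_dist_null[OF assms(1)] by blast
  then have "(\<lambda>n. d ((xs \<circ> r) n) x) \<longlonglongrightarrow> 0"
    using LIMSEQ_subseq_LIMSEQ[OF _ r] by (simp add: o_def)
  moreover have "range (xs \<circ> r) \<subseteq> M"
    using assms(3) by auto
  ultimately show "\<exists>s. strict_mono s \<and> w (xs \<circ> r \<circ> s) x"
    using weak_conv_subseq_if_dist_tendsto_zero[OF assms(1,2) _ assms(4)] by blast
qed

end
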